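(* Let $k=3$, $t\ge 2$, $m=2^t-3$, and let $n$ be an integer with $0\le n\le m$, $i=m-n$. Then in $\mathbb{F}_2[w_2,w_3]$, \[ q_iq_n+q_{i+1}q_{n-1}+w_3q_{i-1}q_{n-2}=0, \] a homogeneous relation of degree $2^t-3$ among $q_{n-2},q_{n-1},q_n$.
   Context: In $\mathbb{F}_2[w_2,w_3]$ ($\deg w_2=2,\deg w_3=3$), $q_0=1$, $q_m=0$ for $m<0$, and $q_m=w_2q_{m-2}+w_3q_{m-3}$ for $m\ge1$. *)

theory Defs
  imports "HOL-Library.Z2" "HOL-Computational_Algebra.Polynomial"
begin

text \<open>F_2[w2,w3] is modelled as (bit poly) poly: the inner variable is w2, the outer variable is w3.\<close>

definition w2 :: "bit poly poly" where "w2 = [:[:0, 1:]:]"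
definition w3 :: "bit poly poly" where "w3 = [:0, 1:]"

function q :: "int \<Rightarrow> bit poly poly" where
  "q m = (if m < 0 then 0 else if m = 0 then 1 else w2 * q (m - 2) + w3 * q (m - 3))"
  by auto
termination by (relation "measure (\<lambda>m. nat m)") auto

end

theory Submission
  imports Defs
begin

text \<open>The recurrence gives the addition formula
  \<open>q (i + n) = q i q n + q (i+1) q (n-1) + w3 q (i-1) q (n-2)\<close> for \<open>i, n \<ge> 0\<close>
  (both sides satisfy the recurrence in \<open>n\<close>).  Taking \<open>i = n + 1\<close> and working in characteristic 2
  yields \<open>q (2n+1) = w3 q (n-1)\<^sup>2\<close>, so \<open>q (2\<^sup>t - 3) = 0\<close> by induction on \<open>t\<close> starting from \<open>q 1 = 0\<close>.
  The theorem is the addition formula with \<open>i + n = 2\<^sup>t - 3\<close>.\<close>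

declare q.simps[simp del]

lemma q_neg: "m < 0 \<Longrightarrow> q m = 0"
  by (subst q.simps) simp

lemma q_0: "q 0 = 1"
  by (subst q.simps) simp

lemma q_rec: "m \<ge> 1 \<Longrightarrow> q m = w2 * q (m - 2) + w3 * q (m - 3)"
  by (subst q.simps) simp

lemma q_1: "q 1 = 0"
  by (simp add: q_rec q_neg)

lemma q_2: "q 2 = w2"
  by (simp add: q_rec q_neg q_0)

lemma poly_add_self_eq_0:
  assumes "\<And>a::'a::comm_ring_1. a + a = 0"
  shows "(p::'a poly) + p = 0"
  by (rule poly_eqI) (simp only: coeff_add assms coeff_0)

lemma add_self_eq_0: "(x::bit poly poly) + x = 0"
  by (intro poly_add_self_eq_0) simp

lemma q_add:
  assumes "i \<ge> 0"
  shows "q (i + int k) = q i * q (int k) + q (i + 1) * q (int k - 1) + w3 * q (i - 1) * q (int k - 2)"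
proof (induction k rule: less_induct)
  case (less k)
  consider "k = 0" | "k = 1" | "k = 2" | j where "k = j + 3"
    by (metis add_2_eq_Suc' add_Suc_right le_add_diff_inverse2 less_Suc_eq not_less numeral_3_eq_3
        numeral_2_eq_2 One_nat_def less_Suc0)
  then show ?case
  proof cases
    case 3
    then show ?thesis using assms
      by (simp add: q_neg q_0 q_1 q_2 q_rec[of "i + 2"] algebra_simps)
  next
    case 4
    have rec_k: "q (int k) = w2 * q (int j + 1) + w3 * q (int j)"
      using q_rec[of "int k"] 4 by (simp add: add.commute)
    have rec_k1: "q (int k - 1) = w2 * q (int j) + w3 * q (int j - 1)"
      using q_rec[of "int k - 1"] 4 by (simp add: algebra_simps)
    have rec_k2: "q (int k - 2) = w2 * q (int j - 1) + w3 * q (int j - 2)"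
      using q_rec[of "int k - 2"] 4 by (simp add: algebra_simps)
    have "q (i + int k) = w2 * q (i + int (j + 1)) + w3 * q (i + int j)"
      using q_rec[of "i + int k"] 4 assms by (simp add: algebra_simps)
    also have "\<dots> = q i * q (int k) + q (i + 1) * q (int k - 1) + w3 * q (i - 1) * q (int k - 2)"
      using less.IH[of "j + 1"] less.IH[of j] 4 unfolding rec_k rec_k1 rec_k2 by (simp add: algebra_simps)
    finally show ?thesis .
  qed (simp_all add: q_neg q_0 q_1)
qed

lemma q_double_plus_1: "n \<ge> 0 \<Longrightarrow> q (2 * n + 1) = w3 * q (n - 1) ^ 2"
proof -
  assume n: "n \<ge> 0"
  have "q (2 * n + 1) = q (n + 1) * q n + q (n + 2) * q (n - 1) + w3 * q n * q (n - 2)"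
    using q_add[of "n + 1" "nat n"] n by (simp add: algebra_simps)
  also have "\<dots> = w3 * q (n - 1) ^ 2 + (w2 * q (n - 1) * q n + w2 * q (n - 1) * q n)
       + (w3 * q n * q (n - 2) + w3 * q n * q (n - 2))"
    using q_rec[of "n + 1"] q_rec[of "n + 2"] n by (simp add: algebra_simps power2_eq_square)
  also have "\<dots> = w3 * q (n - 1) ^ 2"
    by (simp add: add_self_eq_0)
  finally show ?thesis .
qed

lemma q_two_power_minus_3: "t \<ge> 2 \<Longrightarrow> q (2 ^ t - 3) = 0"
proof (induction t rule: dec_induct)
  case base
  then show ?case by (simp add: q_1)
next
  case (step t)
  have "(2::int) ^ 2 \<le> 2 ^ t"
    using step.hyps by (intro power_increasing) auto
  then have "q (2 * (2 ^ t - 2) + 1) = w3 * q (2 ^ t - 3) ^ 2"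
    using q_double_plus_1[of "2 ^ t - 2"] by simp
  then show ?case
    using step.IH by simp
qed

theorem mainTheorem9:
  fixes t :: nat and m n i :: int
  assumes "t \<ge> 2" and "m = 2 ^ t - 3" and "0 \<le> n" and "n \<le> m" and "i = m - n"
  shows "q i * q n + q (i + 1) * q (n - 1) + w3 * q (i - 1) * q (n - 2) = 0"
proof -
  have "q i * q n + q (i + 1) * q (n - 1) + w3 * q (i - 1) * q (n - 2) = q (i + int (nat n))"
    using q_add[of i "nat n"] assms by simp
  also have "\<dots> = q (2 ^ t - 3)"
    using assms by simp
  also have "\<dots> = 0"
    using q_two_power_minus_3 assms(1) .
  finally show ?thesis .
qed

end
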